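(* Let $n>5$ and let $S\in\mathcal D_n^s$ be such that both of its directed cycles have odd length. Then: (i) if $n$ is even, the maximal energy among such $S$ is attained by $S\cong D_n^s[3,n-3]$; (ii) if $n$ is odd, the maximal energy among such $S$ is attained by $S\cong D_n^s[3,n-4]$; (iii) the minimal energy among such $S$ is attained by $S\cong D_n^s[3,3]$.
   Context: A signed digraph (sidigraph) is a digraph in which every arc carries a sign $+1$ or $-1$; the energy of a sidigraph is the sum of the absolute values of the real parts of the eigenvalues of its signed adjacency matrix. The sign of a directed cycle is the product of the signs of its arcs; $C_k$ denotes a positive directed cycle of length $k$. It is known that for odd $k$ every directed cycle of length $k$ (positive or negative) has energy $\csc\frac{\pi}{2k}$. $\mathcal D_n^s$ is the class of sidigraphs on $n$ vertices whose underlying graph is connected and which contain exactly two directed cycles, these two cycles being vertex-disjoint. The energy of $S\in\mathcal D_n^s$ equals the sum of the energies of its two directed cycles. For integers $p,q\ge 2$ with $p+q\le n$, $D_n^s[p,q]$ denotes a member of $\mathcal D_n^s$ whose two directed cycles are $C_p$ and $C_q$. *)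

theory Defs
  imports Complex_Main "HOL-Computational_Algebra.Polynomial" "Jordan_Normal_Form.Char_Poly"
begin

text \<open>A sidigraph on the vertex set {0..<n} is given by its arc set A and a sign
function sg (only relevant on arcs), with signs in {1,-1}; no loops.\<close>

definition is_sidigraph :: "nat \<Rightarrow> (nat \<times> nat) set \<Rightarrow> (nat \<times> nat \<Rightarrow> int) \<Rightarrow> bool" where
  "is_sidigraph n A sg \<longleftrightarrow> A \<subseteq> {0..<n} \<times> {0..<n} \<and> (\<forall>v. (v, v) \<notin> A)
     \<and> (\<forall>a\<in>A. sg a = 1 \<or> sg a = -1)"

definition underlying_connected :: "nat \<Rightarrow> (nat \<times> nat) set \<Rightarrow> bool" where
  "underlying_connected n A \<longleftrightarrow> (\<forall>u\<in>{0..<n}. \<forall>v\<in>{0..<n}. (u, v) \<in> (A \<union> A\<inverse>)\<^sup>*)"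

definition is_dcycle_list :: "(nat \<times> nat) set \<Rightarrow> nat list \<Rightarrow> bool" where
  "is_dcycle_list A vs \<longleftrightarrow> distinct vs \<and> length vs \<ge> 2 \<and>
     (\<forall>i<length vs. (vs ! i, vs ! ((i + 1) mod length vs)) \<in> A)"

definition cycle_arcs :: "nat list \<Rightarrow> (nat \<times> nat) set" where
  "cycle_arcs vs = {(vs ! i, vs ! ((i + 1) mod length vs)) | i. i < length vs}"

text \<open>The directed cycles of a digraph, each identified with its arc set.\<close>
definition dcycles :: "(nat \<times> nat) set \<Rightarrow> (nat \<times> nat) set set" where
  "dcycles A = {cycle_arcs vs | vs. is_dcycle_list A vs}"

definition cycle_length :: "(nat \<times> nat) set \<Rightarrow> nat" where
  "cycle_length C = card C"

definition cycle_vertices :: "(nat \<times> nat) set \<Rightarrow> nat set" where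
  "cycle_vertices C = fst ` C"

definition cycle_sign :: "(nat \<times> nat \<Rightarrow> int) \<Rightarrow> (nat \<times> nat) set \<Rightarrow> int" where
  "cycle_sign sg C = (\<Prod>a\<in>C. sg a)"

definition in_Dns :: "nat \<Rightarrow> (nat \<times> nat) set \<Rightarrow> (nat \<times> nat \<Rightarrow> int) \<Rightarrow> bool" where
  "in_Dns n A sg \<longleftrightarrow> is_sidigraph n A sg \<and> underlying_connected n A \<and>
     card (dcycles A) = 2 \<and>
     (\<forall>C1\<in>dcycles A. \<forall>C2\<in>dcycles A. C1 \<noteq> C2 \<longrightarrow> cycle_vertices C1 \<inter> cycle_vertices C2 = {})"

definition is_Dnspq :: "nat \<Rightarrow> nat \<Rightarrow> nat \<Rightarrow> (nat \<times> nat) set \<Rightarrow> (nat \<times> nat \<Rightarrow> int) \<Rightarrow> bool" where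
  "is_Dnspq n p q A sg \<longleftrightarrow> 2 \<le> p \<and> 2 \<le> q \<and> p + q \<le> n \<and> in_Dns n A sg \<and>
     (\<exists>C1\<in>dcycles A. \<exists>C2\<in>dcycles A. C1 \<noteq> C2 \<and> cycle_length C1 = p \<and> cycle_length C2 = q
        \<and> cycle_sign sg C1 = 1 \<and> cycle_sign sg C2 = 1)"

definition signed_adj :: "nat \<Rightarrow> (nat \<times> nat) set \<Rightarrow> (nat \<times> nat \<Rightarrow> int) \<Rightarrow> complex mat" where
  "signed_adj n A sg = mat n n (\<lambda>(i, j). if (i, j) \<in> A then of_int (sg (i, j)) else 0)"

definition energy :: "nat \<Rightarrow> (nat \<times> nat) set \<Rightarrow> (nat \<times> nat \<Rightarrow> int) \<Rightarrow> real" where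
  "energy n A sg = (let p = char_poly (signed_adj n A sg) in
     (\<Sum>z\<in>{z. poly p z = 0}. real (order z p) * \<bar>Re z\<bar>))"

end

theory Submission
  imports Defs "HOL-Combinatorics.Cycles" "HOL-Analysis.Analysis"
begin

(* In the permutation expansion of det (xI - M) for a sidigraph whose only directed cycles are
   two disjoint cycles of lengths p, q and signs s1, s2, the only surviving permutations are the
   identity, the two cycles and their product, so the characteristic polynomial is
   x^(n-p-q) (x^p - s1) (x^q - s2).  For odd k the k-th roots of 1 and of -1 have absolute real
   parts summing to f(k) = csc(pi/(2k)), hence the energy is f(p) + f(q).  Since f is increasing
   and convex on [1, oo), under p, q >= 3 and p + q <= N the sum f(p) + f(q) is largest at
   (3, N - 3) and smallest at (3, 3); as p + q is even, N = n for even n and N = n - 1 for odd n.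
   The maximum and minimum are attained by a triangle and a second cycle joined by arcs. *)

section \<open>Directed cycle lists\<close>

lemma cycle_arcs_conv_image:
  "cycle_arcs ws = (\<lambda>i. (ws ! i, ws ! ((i + 1) mod length ws))) ` {..<length ws}"
  unfolding cycle_arcs_def by auto

lemma finite_cycle_arcs: "finite (cycle_arcs ws)"
  unfolding cycle_arcs_conv_image by simp

lemma card_cycle_arcs: "distinct ws \<Longrightarrow> card (cycle_arcs ws) = length ws"
  unfolding cycle_arcs_conv_image
  by (subst card_image) (auto simp: inj_on_def nth_eq_iff_index_eq)

lemma fst_cycle_arcs: "fst ` cycle_arcs ws = set ws"
  unfolding cycle_arcs_conv_image by (force simp: in_set_conv_nth image_iff)

lemma is_dcycle_list_iff:
  "is_dcycle_list A ws \<longleftrightarrow> distinct ws \<and> 2 \<le> length ws \<and> cycle_arcs ws \<subseteq> A"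
  unfolding is_dcycle_list_def cycle_arcs_def by auto

lemma cycle_of_list_nth:
  assumes "distinct ws" "i < length ws"
  shows "cycle_of_list ws (ws ! i) = ws ! ((i + 1) mod length ws)"
proof -
  have "cycle_of_list ws (ws ! i) = map (cycle_of_list ws) ws ! i"
    using assms(2) by simp
  also have "\<dots> = rotate1 ws ! i"
    using cyclic_rotation[OF assms(1), of 1] by simp
  finally show ?thesis
    using assms(2) by (simp add: nth_rotate1)
qed

lemma cycle_arcs_eq_graph:
  assumes "distinct ws"
  shows "cycle_arcs ws = (\<lambda>x. (x, cycle_of_list ws x)) ` set ws"
proof -
  have "cycle_arcs ws = (\<lambda>x. (x, cycle_of_list ws x)) ` ((!) ws ` {..<length ws})"
    unfolding cycle_arcs_conv_image image_image using cycle_of_list_nth[OF assms] by simp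
  also have "(!) ws ` {..<length ws} = set ws"
    by (auto simp: in_set_conv_nth)
  finally show ?thesis .
qed

lemma cycle_of_list_moves:
  assumes "distinct ws" "2 \<le> length ws" "x \<in> set ws"
  shows "cycle_of_list ws x \<noteq> x"
proof -
  obtain i where i: "i < length ws" "x = ws ! i"
    using assms(3) by (metis in_set_conv_nth)
  have "(i + 1) mod length ws \<noteq> i"
  proof (cases "i + 1 < length ws")
    case False
    then have "i + 1 = length ws"
      using i(1) by simp
    then show ?thesis
      using assms(2) by auto
  qed simp
  moreover have "(i + 1) mod length ws < length ws"
    using i(1) by (intro mod_less_divisor) linarith
  ultimately show ?thesis
    using assms(1) i cycle_of_list_nth[OF assms(1) i(1)] by (simp add: nth_eq_iff_index_eq)
qed

lemma cycle_of_list_eqI: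
  assumes "distinct vs" "distinct ws" "cycle_arcs vs = cycle_arcs ws"
  shows "cycle_of_list vs = cycle_of_list ws"
proof
  fix x
  have sets: "set vs = set ws"
    using arg_cong[OF assms(3), of "(`) fst"] by (simp add: fst_cycle_arcs)
  show "cycle_of_list vs x = cycle_of_list ws x"
  proof (cases "x \<in> set vs")
    case True
    then have "(x, cycle_of_list vs x) \<in> cycle_arcs ws"
      using assms(3) cycle_arcs_eq_graph[OF assms(1)] by auto
    then show ?thesis
      using cycle_arcs_eq_graph[OF assms(2)] by auto
  next
    case False
    then show ?thesis
      using sets by (metis id_outside_supp)
  qed
qed

lemma sign_cycle_of_list:
  "distinct ws \<Longrightarrow> sign (cycle_of_list ws) = (-1) ^ (length ws - 1)"
proof (induction ws rule: cycle_of_list.induct)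
  case (1 i j cs)
  have "sign (cycle_of_list (i # j # cs)) =
      sign (Transposition.transpose i j) * sign (cycle_of_list (j # cs))"
    by (simp add: sign_compose permutation_swap_id permutation_of_cycle)
  also have "\<dots> = (-1) ^ (length (i # j # cs) - 1)"
    using 1 by (simp add: sign_swap_id)
  finally show ?case .
qed (auto simp: sign_id)

lemma cycle_list_invariant:
  assumes "vs \<noteq> []" "i0 < length vs" "P (vs ! i0)"
    and step: "\<And>i. i < length vs \<Longrightarrow> P (vs ! i) \<Longrightarrow> P (vs ! ((i + 1) mod length vs))"
  shows "\<forall>x\<in>set vs. P x"
proof -
  let ?L = "length vs"
  have reach: "P (vs ! ((i0 + d) mod ?L))" for d
  proof (induction d)
    case (Suc d)
    then show ?case
      using step[of "(i0 + d) mod ?L"] assms(1) by (simp add: mod_Suc_eq)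
  qed (use assms in simp)
  show ?thesis
  proof
    fix x
    assume "x \<in> set vs"
    then obtain j where "j < ?L" "x = vs ! j"
      by (metis in_set_conv_nth)
    moreover have "(i0 + (j + ?L - i0)) mod ?L = j"
      using assms(2) \<open>j < ?L\<close> by simp
    ultimately show "P x"
      using reach[of "j + ?L - i0"] by simp
  qed
qed

lemma cycle_arcs_subset_set: "cycle_arcs vs \<subseteq> set vs \<times> set vs"
proof
  fix a
  assume "a \<in> cycle_arcs vs"
  then obtain i where "i < length vs" "a = (vs ! i, vs ! ((i + 1) mod length vs))"
    unfolding cycle_arcs_def by blast
  moreover have "(i + 1) mod length vs < length vs"
    using \<open>i < length vs\<close> by (intro mod_less_divisor) linarith
  ultimately show "a \<in> set vs \<times> set vs"
    by simp
qed

lemma is_dcycle_list_closed: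
  assumes "is_dcycle_list A vs" "u \<in> set vs" "u \<in> U"
    and closed: "\<And>x y. (x, y) \<in> A \<Longrightarrow> x \<in> U \<Longrightarrow> y \<in> U"
  shows "set vs \<subseteq> U"
proof -
  obtain i0 where i0: "i0 < length vs" "vs ! i0 \<in> U"
    using assms(2,3) by (metis in_set_conv_nth)
  have "\<forall>x\<in>set vs. x \<in> U"
  proof (rule cycle_list_invariant[where P = "\<lambda>x. x \<in> U", OF _ i0])
    show "vs \<noteq> []"
      using assms(2) by auto
    fix i
    assume "i < length vs" "vs ! i \<in> U"
    then show "vs ! ((i + 1) mod length vs) \<in> U"
      using assms(1) closed unfolding is_dcycle_list_def by blast
  qed
  then show ?thesis
    by blast
qed

lemma cycle_arcs_subset_imp_eq:
  assumes "distinct ws" "distinct vs" "vs \<noteq> []" "cycle_arcs vs \<subseteq> cycle_arcs ws"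
  shows "cycle_arcs vs = cycle_arcs ws"
proof -
  have sub: "set vs \<subseteq> set ws"
    using image_mono[OF assms(4), of fst] by (simp add: fst_cycle_arcs)
  have closed: "cycle_of_list ws x \<in> set vs" if "x \<in> set vs" for x
  proof -
    have "(x, cycle_of_list vs x) \<in> cycle_arcs ws" "(x, cycle_of_list ws x) \<in> cycle_arcs ws"
      using that sub assms(4) cycle_arcs_eq_graph[OF assms(1)] cycle_arcs_eq_graph[OF assms(2)]
      by auto
    then have "cycle_of_list ws x = cycle_of_list vs x"
      using cycle_arcs_eq_graph[OF assms(1)] by auto
    then show ?thesis
      using that cycle_permutes[of vs] by (simp add: permutes_in_image)
  qed
  obtain i0 where i0: "i0 < length ws" "ws ! i0 \<in> set vs"
    using assms(3) sub by (metis hd_in_set in_set_conv_nth subsetD)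
  have "set ws \<subseteq> set vs"
  proof -
    have "\<forall>x\<in>set ws. x \<in> set vs"
    proof (rule cycle_list_invariant)
      fix i
      assume "i < length ws" "ws ! i \<in> set vs"
      then show "ws ! ((i + 1) mod length ws) \<in> set vs"
        using closed cycle_of_list_nth[OF assms(1)] by metis
    qed (use i0 in auto)
    then show ?thesis
      by blast
  qed
  then have "set vs = set ws"
    using sub by blast
  then have "card (cycle_arcs vs) = card (cycle_arcs ws)"
    using assms(1,2) by (metis card_cycle_arcs distinct_card)
  then show ?thesis
    using assms(4) finite_cycle_arcs card_subset_eq by blast
qed

section \<open>The characteristic polynomial\<close>

lemma arc_permutation_orbit:
  assumes perm: "permutation \<sigma>" and arcs: "\<forall>x. \<sigma> x \<noteq> x \<longrightarrow> (x, \<sigma> x) \<in> A"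
    and a: "\<sigma> a \<noteq> a"
  obtains ws where "is_dcycle_list A ws" "a \<in> set ws" "\<forall>x\<in>set ws. \<sigma> x = cycle_of_list ws x"
proof
  let ?L = "support \<sigma> a"
  have dist: "distinct ?L"
    using cycle_of_permutation[OF perm] .
  have len: "2 \<le> length ?L"
    using least_power_gt_one[OF perm a] by simp
  show agree: "\<forall>x\<in>set ?L. \<sigma> x = cycle_of_list ?L x"
    using cycle_restrict[OF perm] by blast
  have "cycle_arcs ?L = (\<lambda>x. (x, \<sigma> x)) ` set ?L"
    unfolding cycle_arcs_eq_graph[OF dist] using agree by (intro image_cong) auto
  moreover have "\<sigma> x \<noteq> x" if "x \<in> set ?L" for x
  proof -
    have "\<sigma> x = cycle_of_list ?L x"
      using agree that by blast
    with cycle_of_list_moves[OF dist len that] show ?thesis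
      by (simp only: not_False_eq_True)
  qed
  ultimately show "is_dcycle_list A ?L"
    unfolding is_dcycle_list_iff using dist len arcs by auto
  show "a \<in> set ?L"
    using least_power_of_permutation(2)[OF perm, of a] by force
qed

lemma agrees_with_cycle_or_id:
  assumes "\<forall>a\<in>set vs. \<sigma> a \<noteq> a \<longrightarrow> (\<forall>x\<in>set vs. \<sigma> x = cycle_of_list vs x)"
  obtains g where "g \<in> {id, cycle_of_list vs}" "\<forall>x\<in>set vs. \<sigma> x = g x"
proof (cases "\<exists>a\<in>set vs. \<sigma> a \<noteq> a")
  case True
  then show ?thesis
    using that[of "cycle_of_list vs"] assms by blast
next
  case False
  then show ?thesis
    using that[of id] by auto
qed

lemma arc_permutation_agrees_with_cycle:
  assumes dc: "dcycles A = {cycle_arcs vs1, cycle_arcs vs2}" and dist: "distinct vs1" "distinct vs2"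
    and perm: "permutation \<sigma>" and arcs: "\<forall>x. \<sigma> x \<noteq> x \<longrightarrow> (x, \<sigma> x) \<in> A"
    and a: "\<sigma> a \<noteq> a"
  shows "\<exists>vs\<in>{vs1, vs2}. a \<in> set vs \<and> (\<forall>x\<in>set vs. \<sigma> x = cycle_of_list vs x)"
proof -
  obtain ws where ws: "is_dcycle_list A ws" "a \<in> set ws" "\<forall>x\<in>set ws. \<sigma> x = cycle_of_list ws x"
    using arc_permutation_orbit[OF perm arcs a] .
  then have "cycle_arcs ws \<in> dcycles A"
    unfolding dcycles_def by blast
  then obtain vs where vs: "vs \<in> {vs1, vs2}" "cycle_arcs ws = cycle_arcs vs"
    using dc by auto
  have "distinct ws" "distinct vs"
    using ws(1) vs(1) dist unfolding is_dcycle_list_def by auto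
  then have "cycle_of_list ws = cycle_of_list vs"
    using cycle_of_list_eqI vs(2) by blast
  moreover have "set ws = set vs"
    using arg_cong[OF vs(2), of "(`) fst"] unfolding fst_cycle_arcs .
  ultimately show ?thesis
    using vs(1) ws(2,3) by auto
qed

lemma arc_permutation_cases:
  assumes dc: "dcycles A = {cycle_arcs vs1, cycle_arcs vs2}"
    and dist: "distinct vs1" "distinct vs2" and disj: "set vs1 \<inter> set vs2 = {}"
    and perm: "permutation \<sigma>" and arcs: "\<forall>x. \<sigma> x \<noteq> x \<longrightarrow> (x, \<sigma> x) \<in> A"
  shows "\<sigma> \<in> {id, cycle_of_list vs1, cycle_of_list vs2, cycle_of_list vs1 \<circ> cycle_of_list vs2}"
proof -
  note moved = arc_permutation_agrees_with_cycle[OF dc dist perm arcs]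
  obtain g1 where g1: "g1 \<in> {id, cycle_of_list vs1}" "\<forall>x\<in>set vs1. \<sigma> x = g1 x"
    using agrees_with_cycle_or_id[of vs1 \<sigma>] moved disj by blast
  obtain g2 where g2: "g2 \<in> {id, cycle_of_list vs2}" "\<forall>x\<in>set vs2. \<sigma> x = g2 x"
    using agrees_with_cycle_or_id[of vs2 \<sigma>] moved disj by blast
  have "\<sigma> x = g1 (g2 x)" for x
  proof -
    consider "x \<in> set vs1" | "x \<in> set vs2" | "x \<notin> set vs1" "x \<notin> set vs2"
      by blast
    then show ?thesis
    proof cases
      case 1
      then have "x \<notin> set vs2"
        using disj by blast
      then have "g2 x = x"
        using g2(1) id_outside_supp[of x vs2] by auto
      then show ?thesis
        using g1(2) 1 by simp
    next
      case 2
      have "g2 x \<in> set vs2"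
        using 2 g2(1) cycle_permutes[of vs2] by (auto simp: permutes_in_image)
      then have "g2 x \<notin> set vs1"
        using disj by blast
      then have "g1 (g2 x) = g2 x"
        using g1(1) id_outside_supp[of "g2 x" vs1] by auto
      then show ?thesis
        using g2(2) 2 by simp
    next
      case 3
      then have "\<sigma> x = x"
        using moved by blast
      moreover have "g1 x = x" "g2 x = x"
        using 3 g1(1) g2(1) id_outside_supp[of x] by auto
      ultimately show ?thesis
        by simp
    qed
  qed
  then have "\<sigma> = g1 \<circ> g2"
    by (intro ext) simp
  then show ?thesis
    using g1(1) g2(1) by auto
qed

lemma char_poly_matrix_signed_adj_entry:
  assumes "is_sidigraph n A sg" "i < n" "j < n"
  shows "char_poly_matrix (signed_adj n A sg) $$ (i, j) =
    (if i = j then [:0, 1:] else if (i, j) \<in> A then [:- of_int (sg (i, j)):] else 0)"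
  using assms unfolding char_poly_matrix_def signed_adj_def is_sidigraph_def by auto

lemma set_subset_if_cycle_arcs_subset:
  assumes "is_sidigraph n A sg" "cycle_arcs vs \<subseteq> A"
  shows "set vs \<subseteq> {0..<n}"
proof
  fix x
  assume "x \<in> set vs"
  then obtain y where "(x, y) \<in> cycle_arcs vs"
    unfolding fst_cycle_arcs[symmetric] by auto
  then show "x \<in> {0..<n}"
    using assms unfolding is_sidigraph_def by auto
qed

lemma cycle_of_list_follows_arcs:
  assumes "is_dcycle_list A vs" "x \<in> set vs"
  shows "(x, cycle_of_list vs x) \<in> A" "cycle_of_list vs x \<noteq> x"
proof -
  have dist: "distinct vs" and len: "2 \<le> length vs" and arcs: "cycle_arcs vs \<subseteq> A"
    using assms(1) unfolding is_dcycle_list_iff by auto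
  show "(x, cycle_of_list vs x) \<in> A"
    using arcs assms(2) cycle_arcs_eq_graph[OF dist] by auto
  show "cycle_of_list vs x \<noteq> x"
    using cycle_of_list_moves[OF dist len assms(2)] .
qed

lemma cycle_of_list_comp_disjoint:
  assumes "set vs1 \<inter> set vs2 = {}"
  shows "x \<in> set vs1 \<Longrightarrow> (cycle_of_list vs1 \<circ> cycle_of_list vs2) x = cycle_of_list vs1 x"
    and "x \<in> set vs2 \<Longrightarrow> (cycle_of_list vs1 \<circ> cycle_of_list vs2) x = cycle_of_list vs2 x"
    and "x \<notin> set vs1 \<Longrightarrow> x \<notin> set vs2 \<Longrightarrow> (cycle_of_list vs1 \<circ> cycle_of_list vs2) x = x"
proof -
  show "(cycle_of_list vs1 \<circ> cycle_of_list vs2) x = cycle_of_list vs1 x" if "x \<in> set vs1"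
  proof -
    have "x \<notin> set vs2"
      using that assms by blast
    then show ?thesis
      by (simp add: id_outside_supp)
  qed
  show "(cycle_of_list vs1 \<circ> cycle_of_list vs2) x = cycle_of_list vs2 x" if "x \<in> set vs2"
  proof -
    have "cycle_of_list vs2 x \<in> set vs2"
      using that cycle_permutes[of vs2] by (simp add: permutes_in_image)
    then have "cycle_of_list vs2 x \<notin> set vs1"
      using assms by blast
    then show ?thesis
      by (simp add: id_outside_supp)
  qed
  show "(cycle_of_list vs1 \<circ> cycle_of_list vs2) x = x" if "x \<notin> set vs1" "x \<notin> set vs2"
    by (simp add: id_outside_supp that)
qed

lemma distinct_cycle_products:
  assumes "is_dcycle_list A vs1" "is_dcycle_list A vs2" "set vs1 \<inter> set vs2 = {}"
  shows "distinct [id, cycle_of_list vs1, cycle_of_list vs2, cycle_of_list vs1 \<circ> cycle_of_list vs2]"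
proof -
  let ?f1 = "cycle_of_list vs1" and ?f2 = "cycle_of_list vs2"
  obtain v1 v2 where v: "v1 \<in> set vs1" "v2 \<in> set vs2"
    using assms(1,2) unfolding is_dcycle_list_def by (metis hd_in_set list.size(3) not_numeral_le_zero)
  then have "v1 \<notin> set vs2" "v2 \<notin> set vs1"
    using assms(3) by auto
  then have "?f1 v1 \<noteq> v1" "?f2 v1 = v1" "(?f1 \<circ> ?f2) v1 = ?f1 v1"
    and "?f2 v2 \<noteq> v2" "?f1 v2 = v2" "(?f1 \<circ> ?f2) v2 = ?f2 v2"
    using v assms cycle_of_list_follows_arcs cycle_of_list_comp_disjoint id_outside_supp by metis+
  then have "id \<noteq> ?f1" "id \<noteq> ?f2" "id \<noteq> ?f1 \<circ> ?f2"
    and "?f1 \<noteq> ?f2" "?f1 \<noteq> ?f1 \<circ> ?f2" "?f2 \<noteq> ?f1 \<circ> ?f2"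
    by (metis id_apply)+
  then show ?thesis
    by simp
qed

definition det_term :: "nat \<Rightarrow> 'a :: comm_ring_1 mat \<Rightarrow> (nat \<Rightarrow> nat) \<Rightarrow> 'a" where
  "det_term n M \<sigma> = signof \<sigma> * (\<Prod>i = 0..<n. M $$ (i, \<sigma> i))"

text \<open>A permutation that does not follow the arcs picks a zero entry of \<open>x I - M\<close>.\<close>

lemma char_poly_signed_adj_eq_sum:
  assumes sid: "is_sidigraph n A sg" and T: "T \<subseteq> {\<sigma>. \<sigma> permutes {0..<n}}"
    and arc_perms:
      "\<And>\<sigma>. \<sigma> permutes {0..<n} \<Longrightarrow> \<forall>x. \<sigma> x \<noteq> x \<longrightarrow> (x, \<sigma> x) \<in> A \<Longrightarrow> \<sigma> \<in> T"
  shows "char_poly (signed_adj n A sg) = (\<Sum>\<sigma>\<in>T. det_term n (char_poly_matrix (signed_adj n A sg)) \<sigma>)"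
proof -
  let ?M = "char_poly_matrix (signed_adj n A sg)"
  have "char_poly (signed_adj n A sg) = (\<Sum>\<sigma>\<in>{\<sigma>. \<sigma> permutes {0..<n}}. det_term n ?M \<sigma>)"
    unfolding char_poly_def det_term_def by (rule det_def') (simp add: signed_adj_def)
  also have "\<dots> = (\<Sum>\<sigma>\<in>T. det_term n ?M \<sigma>)"
  proof (rule sum.mono_neutral_right[OF _ T])
    show "\<forall>\<sigma>\<in>{\<sigma>. \<sigma> permutes {0..<n}} - T. det_term n ?M \<sigma> = 0"
    proof
      fix \<sigma>
      assume \<sigma>: "\<sigma> \<in> {\<sigma>. \<sigma> permutes {0..<n}} - T"
      then have perm: "\<sigma> permutes {0..<n}"
        by simp
      then obtain i where i: "\<sigma> i \<noteq> i" "(i, \<sigma> i) \<notin> A"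
        using arc_perms \<sigma> by blast
      then have "i < n"
        using perm permutes_not_in by fastforce
      moreover have "\<sigma> i < n"
        using perm \<open>i < n\<close> by (simp add: permutes_in_image)
      ultimately have "?M $$ (i, \<sigma> i) = 0"
        using char_poly_matrix_signed_adj_entry[OF sid] i by simp
      then show "det_term n ?M \<sigma> = 0"
        unfolding det_term_def using \<open>i < n\<close> by (auto simp: prod_zero_iff)
    qed
  qed (simp add: finite_permutations)
  finally show ?thesis .
qed

lemma det_term_signed_adj:
  assumes sid: "is_sidigraph n A sg" and perm: "\<sigma> permutes {0..<n}" and S: "S \<subseteq> {0..<n}"
    and moved: "\<forall>i\<in>S. (i, \<sigma> i) \<in> A \<and> \<sigma> i \<noteq> i"
    and fixed: "\<forall>i\<in>{0..<n} - S. \<sigma> i = i"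
  shows "det_term n (char_poly_matrix (signed_adj n A sg)) \<sigma> =
    [:0, 1:] ^ (n - card S) * [:signof \<sigma> * (\<Prod>i\<in>S. - of_int (sg (i, \<sigma> i))):]"
proof -
  let ?M = "char_poly_matrix (signed_adj n A sg)"
  have "(\<Prod>i = 0..<n. ?M $$ (i, \<sigma> i)) =
      (\<Prod>i\<in>{0..<n} - S. ?M $$ (i, \<sigma> i)) * (\<Prod>i\<in>S. ?M $$ (i, \<sigma> i))"
    using prod.subset_diff[OF S] by simp
  also have "(\<Prod>i\<in>{0..<n} - S. ?M $$ (i, \<sigma> i)) = (\<Prod>i\<in>{0..<n} - S. [:0, 1:])"
    using fixed char_poly_matrix_signed_adj_entry[OF sid] by (intro prod.cong) auto
  also have "\<dots> = [:0, 1:] ^ (n - card S)"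
    using S finite_subset[OF S] by (simp add: card_Diff_subset)
  also have "(\<Prod>i\<in>S. ?M $$ (i, \<sigma> i)) = (\<Prod>i\<in>S. [:- of_int (sg (i, \<sigma> i)):])"
    using S moved char_poly_matrix_signed_adj_entry[OF sid] perm
    by (intro prod.cong) (auto simp: permutes_in_image subset_iff)
  finally show ?thesis
    unfolding det_term_def by (simp add: prod_to_poly of_int_poly[of "sign \<sigma>"] ac_simps)
qed

text \<open>The sign \<open>(-1)^(k-1)\<close> of a \<open>k\<close>-cycle and the \<open>k\<close> minus signs of the entries
  leave a single minus sign.\<close>

lemma cycle_permutation_weight:
  assumes "distinct ws" "ws \<noteq> []"
  shows "signof (cycle_of_list ws) * (\<Prod>i\<in>set ws. - of_int (sg (i, cycle_of_list ws i))) =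
    - (of_int (cycle_sign sg (cycle_arcs ws)) :: 'a :: comm_ring_1)"
proof -
  have "cycle_sign sg (cycle_arcs ws) = (\<Prod>x\<in>set ws. sg (x, cycle_of_list ws x))"
    unfolding cycle_sign_def cycle_arcs_eq_graph[OF assms(1)]
    by (subst prod.reindex) (auto simp: inj_on_def)
  moreover have "(-1 :: 'a) ^ (length ws - 1) * (-1) ^ length ws = -1"
    using assms(2) by (cases ws) auto
  ultimately show ?thesis
    using assms(1)
    by (simp add: sign_cycle_of_list prod_uminus distinct_card mult.assoc[symmetric])
qed

lemma det_term_signed_adj_cycle:
  assumes sid: "is_sidigraph n A sg" and d: "is_dcycle_list A vs"
  shows "det_term n (char_poly_matrix (signed_adj n A sg)) (cycle_of_list vs) =
    [:0, 1:] ^ (n - length vs) * [:- of_int (cycle_sign sg (cycle_arcs vs)):]"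
proof -
  have V: "set vs \<subseteq> {0..<n}" and dist: "distinct vs" and ne: "vs \<noteq> []"
    using d set_subset_if_cycle_arcs_subset[OF sid] unfolding is_dcycle_list_iff by auto
  have "det_term n (char_poly_matrix (signed_adj n A sg)) (cycle_of_list vs) =
      [:0, 1:] ^ (n - card (set vs)) *
      [:signof (cycle_of_list vs) * (\<Prod>i\<in>set vs. - of_int (sg (i, cycle_of_list vs i))):]"
    using V cycle_of_list_follows_arcs[OF d] id_outside_supp
    by (intro det_term_signed_adj[OF sid permutes_subset[OF cycle_permutes V] V]) auto
  then show ?thesis
    unfolding cycle_permutation_weight[OF dist ne] distinct_card[OF dist] .
qed

lemma det_term_signed_adj_two_cycles:
  assumes sid: "is_sidigraph n A sg" and d1: "is_dcycle_list A vs1" and d2: "is_dcycle_list A vs2"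
    and disj: "set vs1 \<inter> set vs2 = {}"
  shows "det_term n (char_poly_matrix (signed_adj n A sg)) (cycle_of_list vs1 \<circ> cycle_of_list vs2) =
    [:0, 1:] ^ (n - (length vs1 + length vs2)) *
    [:of_int (cycle_sign sg (cycle_arcs vs1)) * of_int (cycle_sign sg (cycle_arcs vs2)):]"
proof -
  let ?f1 = "cycle_of_list vs1" and ?f2 = "cycle_of_list vs2" and ?S = "set vs1 \<union> set vs2"
  have V: "set vs1 \<subseteq> {0..<n}" "set vs2 \<subseteq> {0..<n}" and dist: "distinct vs1" "distinct vs2"
    and ne: "vs1 \<noteq> []" "vs2 \<noteq> []"
    using d1 d2 set_subset_if_cycle_arcs_subset[OF sid] unfolding is_dcycle_list_iff by auto
  note comp = cycle_of_list_comp_disjoint[OF disj]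
  have perm: "?f1 \<circ> ?f2 permutes {0..<n}"
    using V cycle_permutes permutes_subset permutes_compose by metis
  have "det_term n (char_poly_matrix (signed_adj n A sg)) (?f1 \<circ> ?f2) = [:0, 1:] ^ (n - card ?S) *
      [:signof (?f1 \<circ> ?f2) * (\<Prod>i\<in>?S. - of_int (sg (i, (?f1 \<circ> ?f2) i))):]"
    using V comp cycle_of_list_follows_arcs[OF d1] cycle_of_list_follows_arcs[OF d2]
    by (intro det_term_signed_adj[OF sid perm]) auto
  also have "(\<Prod>i\<in>?S. - of_int (sg (i, (?f1 \<circ> ?f2) i)) :: complex) =
      (\<Prod>i\<in>set vs1. - of_int (sg (i, ?f1 i))) * (\<Prod>i\<in>set vs2. - of_int (sg (i, ?f2 i)))"
    using disj comp by (simp add: prod.union_disjoint cong: prod.cong)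
  also have "signof (?f1 \<circ> ?f2) = (signof ?f1 * signof ?f2 :: complex)"
    by (simp add: sign_compose permutation_of_cycle)
  also have "signof ?f1 * signof ?f2 * ((\<Prod>i\<in>set vs1. - of_int (sg (i, ?f1 i))) *
      (\<Prod>i\<in>set vs2. - of_int (sg (i, ?f2 i)))) =
      (- of_int (cycle_sign sg (cycle_arcs vs1))) * (- of_int (cycle_sign sg (cycle_arcs vs2)) :: complex)"
    unfolding cycle_permutation_weight[OF dist(1) ne(1), symmetric]
      cycle_permutation_weight[OF dist(2) ne(2), symmetric]
    by (simp only: mult_ac)
  also have "card ?S = length vs1 + length vs2"
    using disj dist by (simp add: card_Un_disjoint distinct_card)
  finally show ?thesis
    by (simp add: comp_def)
qed

lemma char_poly_signed_adj_two_cycles: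
  assumes sid: "is_sidigraph n A sg" and d1: "is_dcycle_list A vs1" and d2: "is_dcycle_list A vs2"
    and dc: "dcycles A = {cycle_arcs vs1, cycle_arcs vs2}" and disj: "set vs1 \<inter> set vs2 = {}"
  shows "char_poly (signed_adj n A sg) =
     [:0, 1:] ^ (n - length vs1 - length vs2)
     * ([:0, 1:] ^ length vs1 - [:of_int (cycle_sign sg (cycle_arcs vs1)):])
     * ([:0, 1:] ^ length vs2 - [:of_int (cycle_sign sg (cycle_arcs vs2)):])"
proof -
  let ?f1 = "cycle_of_list vs1" and ?f2 = "cycle_of_list vs2"
  let ?t = "det_term n (char_poly_matrix (signed_adj n A sg))"
  have V: "set vs1 \<subseteq> {0..<n}" "set vs2 \<subseteq> {0..<n}" and dist: "distinct vs1" "distinct vs2"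
    using d1 d2 set_subset_if_cycle_arcs_subset[OF sid] unfolding is_dcycle_list_iff by auto
  then have "card (set vs1 \<union> set vs2) \<le> n"
    using card_mono[of "{0..<n}" "set vs1 \<union> set vs2"] by simp
  moreover have "card (set vs1 \<union> set vs2) = length vs1 + length vs2"
    using disj dist by (simp add: card_Un_disjoint distinct_card)
  ultimately obtain m where n: "n = m + length vs1 + length vs2"
    by (intro that[of "n - length vs1 - length vs2"]) simp
  have perm: "?f1 permutes {0..<n}" "?f2 permutes {0..<n}"
    using V cycle_permutes permutes_subset by blast+
  have "char_poly (signed_adj n A sg) = sum ?t (set [id, ?f1, ?f2, ?f1 \<circ> ?f2])"
  proof (rule char_poly_signed_adj_eq_sum[OF sid])
    show "set [id, ?f1, ?f2, ?f1 \<circ> ?f2] \<subseteq> {\<sigma>. \<sigma> permutes {0..<n}}"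
      using perm permutes_compose[OF perm(2,1)] permutes_id by auto
  next
    fix \<sigma>
    assume "\<sigma> permutes {0..<n}" "\<forall>x. \<sigma> x \<noteq> x \<longrightarrow> (x, \<sigma> x) \<in> A"
    moreover from this(1) have "permutation \<sigma>"
      using permutation_permutes by blast
    ultimately show "\<sigma> \<in> set [id, ?f1, ?f2, ?f1 \<circ> ?f2]"
      using arc_permutation_cases[OF dc dist disj] by simp
  qed
  also have "\<dots> = ?t id + ?t ?f1 + ?t ?f2 + ?t (?f1 \<circ> ?f2)"
    using distinct_cycle_products[OF d1 d2 disj] by (simp add: sum.distinct_set_conv_list)
  finally show ?thesis
    using det_term_signed_adj[OF sid permutes_id[of "{0..<n}"], of "{}"]
      det_term_signed_adj_cycle[OF sid d1] det_term_signed_adj_cycle[OF sid d2]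
      det_term_signed_adj_two_cycles[OF sid d1 d2 disj]
    unfolding n by (simp add: algebra_simps power_add one_pCons)
qed

section \<open>Energy of a polynomial\<close>

definition poly_energy :: "complex poly \<Rightarrow> real" where
  "poly_energy f = (\<Sum>z\<in>{z. poly f z = 0}. real (order z f) * \<bar>Re z\<bar>)"

lemma energy_eq_poly_energy: "energy n A sg = poly_energy (char_poly (signed_adj n A sg))"
  unfolding energy_def poly_energy_def Let_def ..

lemma poly_energy_eq_sum:
  assumes "f \<noteq> 0" "finite R" "{z. poly f z = 0} \<subseteq> R"
  shows "poly_energy f = (\<Sum>z\<in>R. real (order z f) * \<bar>Re z\<bar>)"
  unfolding poly_energy_def using assms order_root by (intro sum.mono_neutral_left) auto

lemma poly_energy_mult:
  assumes "f \<noteq> 0" "g \<noteq> 0"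
  shows "poly_energy (f * g) = poly_energy f + poly_energy g"
proof -
  have fg: "f * g \<noteq> 0"
    using assms by simp
  let ?R = "{z. poly (f * g) z = 0}"
  have fin: "finite ?R"
    using poly_roots_finite[OF fg] .
  have "poly_energy (f * g) = (\<Sum>z\<in>?R. real (order z f) * \<bar>Re z\<bar> + real (order z g) * \<bar>Re z\<bar>)"
    unfolding poly_energy_def order_mult[OF fg] by (simp add: algebra_simps)
  moreover have "poly_energy f = (\<Sum>z\<in>?R. real (order z f) * \<bar>Re z\<bar>)"
    by (rule poly_energy_eq_sum[OF assms(1) fin]) auto
  moreover have "poly_energy g = (\<Sum>z\<in>?R. real (order z g) * \<bar>Re z\<bar>)"
    by (rule poly_energy_eq_sum[OF assms(2) fin]) auto
  ultimately show ?thesis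
    by (simp add: sum.distrib)
qed

lemma poly_energy_monom: "poly_energy ([:0, 1:] ^ m) = 0"
  unfolding poly_energy_def by (rule sum.neutral) (auto simp: poly_power)

lemma poly_binomial: "poly ([:0, 1:] ^ k - [:s:]) (z :: 'a :: comm_ring_1) = z ^ k - s"
  by (simp add: poly_power)

lemma binomial_poly_nonzero:
  assumes "k \<ge> 1" shows "([:0, 1:] ^ k - [:s:] :: complex poly) \<noteq> 0"
proof
  assume "[:0, 1:] ^ k - [:s:] = 0"
  then have "poly ([:0, 1:] ^ k - [:s:]) 0 = poly ([:0, 1:] ^ k - [:s:]) (1 :: complex)"
    by simp
  then show False
    using assms by (simp add: poly_binomial power_0_left)
qed

text \<open>The roots of \<open>x^k - s\<close> are simple for \<open>s \<noteq> 0\<close>, so no multiplicities enter.\<close>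

lemma poly_energy_binomial:
  assumes k: "k \<ge> 1" and s: "s \<noteq> 0"
  shows "poly_energy ([:0, 1:] ^ k - [:s:]) = (\<Sum>z\<in>{z. z ^ k = s}. \<bar>Re z\<bar>)"
proof -
  let ?f = "[:0, 1:] ^ k - [:s:] :: complex poly"
  have deriv: "poly (pderiv ?f) z = of_nat k * z ^ (k - 1)" for z
    by (simp add: pderiv_power pderiv_diff poly_power pderiv_pCons)
  have sqfree: "rsquarefree ?f"
    unfolding rsquarefree_roots
  proof (intro allI notI)
    fix z
    assume "poly ?f z = 0 \<and> poly (pderiv ?f) z = 0"
    then have "z ^ k = s" "of_nat k * z ^ (k - 1) = 0"
      using deriv poly_binomial by auto
    then show False
      using k s by (cases "z = 0") (auto simp: power_0_left)
  qed
  have "poly_energy ?f = (\<Sum>z\<in>{z. poly ?f z = 0}. \<bar>Re z\<bar>)"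
    unfolding poly_energy_def
    using rsquarefree_root_order[OF sqfree _ binomial_poly_nonzero[OF k]] by (intro sum.cong) auto
  also have "{z. poly ?f z = 0} = {z. z ^ k = s}"
    by (simp add: poly_binomial)
  finally show ?thesis .
qed

lemma sum_abs_Re_roots_unity:
  assumes "k \<ge> 1"
  shows "(\<Sum>z\<in>{z::complex. z ^ k = 1}. \<bar>Re z\<bar>) = (\<Sum>j<k. \<bar>cos (2 * pi * real j / real k)\<bar>)"
proof -
  have "(\<Sum>j<k. \<bar>Re (cis (2 * pi * real j / real k))\<bar>) = (\<Sum>z\<in>{z::complex. z ^ k = 1}. \<bar>Re z\<bar>)"
    using assms by (intro sum.reindex_bij_betw Complex.bij_betw_roots_unity) auto
  then show ?thesis
    by simp
qed

lemma sum_abs_Re_roots_minus_one: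
  assumes "odd k"
  shows "(\<Sum>z\<in>{z::complex. z ^ k = -1}. \<bar>Re z\<bar>) = (\<Sum>z\<in>{z::complex. z ^ k = 1}. \<bar>Re z\<bar>)"
proof -
  have "bij_betw uminus {z::complex. z ^ k = 1} {z. z ^ k = -1}"
    by (rule bij_betw_byWitness[where f' = uminus]) (use assms in auto)
  from sum.reindex_bij_betw[OF this, of "\<lambda>z. \<bar>Re z\<bar>"] show ?thesis
    by simp
qed

lemma abs_cos_add_mult_pi: "\<bar>cos (x + real m * pi)\<bar> = \<bar>cos x\<bar>"
proof (induction m)
  case (Suc m)
  have "cos (x + real (Suc m) * pi) = - cos (x + real m * pi)"
    using cos_periodic_pi[of "x + real m * pi"] by (simp add: algebra_simps)
  then show ?case
    using Suc by simp
qed simp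

lemma bij_betw_double_mod:
  fixes k :: nat
  assumes "odd k"
  shows "bij_betw (\<lambda>j. (2 * j) mod k) {..<k} {..<k}"
proof (rule bij_betw_byWitness[where f' = "\<lambda>j. if even j then j div 2 else (j + k) div 2"])
  show "\<forall>j\<in>{..<k}. (if even ((2 * j) mod k) then (2 * j) mod k div 2 else ((2 * j) mod k + k) div 2) = j"
  proof
    fix j
    assume j: "j \<in> {..<k}"
    show "(if even ((2 * j) mod k) then (2 * j) mod k div 2 else ((2 * j) mod k + k) div 2) = j"
    proof (cases "2 * j < k")
      case False
      then have m: "(2 * j) mod k = 2 * j - k"
        using j by (simp add: le_mod_geq)
      have "odd (2 * j - k)"
        using False assms by simp
      then show ?thesis
        unfolding m using False by simp
    qed simp
  qed
  show "\<forall>j\<in>{..<k}. 2 * (if even j then j div 2 else (j + k) div 2) mod k = j"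
  proof
    fix j
    assume j: "j \<in> {..<k}"
    show "2 * (if even j then j div 2 else (j + k) div 2) mod k = j"
    proof (cases "even j")
      case False
      then have "2 * ((j + k) div 2) = j + k"
        using assms by simp
      then show ?thesis
        using False j by simp
    qed (use j in simp)
  qed
  show "(\<lambda>j. 2 * j mod k) ` {..<k} \<subseteq> {..<k}"
    using assms by (cases k) auto
qed auto

text \<open>For odd \<open>k\<close>, doubling permutes the residues mod \<open>k\<close>, which turns the angles \<open>2 \<pi> j / k\<close>
  into \<open>\<pi> i / k\<close> up to multiples of \<open>\<pi>\<close>.\<close>

lemma sum_abs_cos_double_angles:
  assumes "odd k"
  shows "(\<Sum>j<k. \<bar>cos (2 * pi * real j / real k)\<bar>) = (\<Sum>i<k. \<bar>cos (pi * real i / real k)\<bar>)"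
proof -
  have kpos: "k > 0"
    using assms by (cases k) simp_all
  have "\<bar>cos (2 * pi * real j / real k)\<bar> = \<bar>cos (pi * real ((2 * j) mod k) / real k)\<bar>" for j
  proof -
    have "real (2 * j) = real ((2 * j) mod k) + real k * real ((2 * j) div k)"
      by (metis mod_div_mult_eq of_nat_add of_nat_mult mult.commute)
    then have "2 * pi * real j / real k = pi * real ((2 * j) mod k) / real k + real ((2 * j) div k) * pi"
      using kpos by (simp add: field_simps)
    then show ?thesis
      by (simp add: abs_cos_add_mult_pi)
  qed
  then have "(\<Sum>j<k. \<bar>cos (2 * pi * real j / real k)\<bar>) = (\<Sum>j<k. \<bar>cos (pi * real ((2 * j) mod k) / real k)\<bar>)"
    by simp
  also have "\<dots> = (\<Sum>i<k. \<bar>cos (pi * real i / real k)\<bar>)"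
    using sum.reindex_bij_betw[OF bij_betw_double_mod[OF assms], of "\<lambda>i. \<bar>cos (pi * real i / real k)\<bar>"] .
  finally show ?thesis .
qed

lemma sin_half_mult_dirichlet_kernel:
  "sin (t / 2) * (1 + 2 * (\<Sum>i\<in>{1..m}. cos (real i * t))) = sin ((2 * real m + 1) * t / 2)"
proof (induction m)
  case (Suc m)
  let ?a = "real (Suc m) * t" and ?b = "t / 2"
  have "sin (t / 2) * (1 + 2 * (\<Sum>i\<in>{1..Suc m}. cos (real i * t)))
     = sin ((2 * real m + 1) * t / 2) + 2 * cos ?a * sin ?b"
    using Suc by (simp add: algebra_simps)
  also have "2 * cos ?a * sin ?b = sin (?a + ?b) - sin (?a - ?b)"
    by (simp add: sin_add sin_diff)
  also have "?a - ?b = (2 * real m + 1) * t / 2"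
    by (simp add: field_simps)
  also have "?a + ?b = (2 * real (Suc m) + 1) * t / 2"
    by (simp add: field_simps)
  finally show ?case
    by simp
qed simp

lemma sum_abs_cos_symmetric:
  assumes k: "k = 2 * m + 1"
  shows "(\<Sum>i<k. \<bar>cos (pi * real i / real k)\<bar>) = 1 + 2 * (\<Sum>i\<in>{1..m}. cos (real i * (pi / real k)))"
proof -
  have kpos: "real k > 0"
    using k by simp
  have nonneg: "cos (pi * real i / real k) \<ge> 0" if "i \<le> m" for i
  proof (rule cos_ge_zero)
    have "real i * 2 \<le> real k"
      using that k by simp
    then show "pi * real i / real k \<le> pi / 2"
      using kpos by (simp add: field_simps)
    have "0 \<le> pi * real i / real k"
      using kpos by simp
    then show "- (pi / 2) \<le> pi * real i / real k"
      using pi_gt_zero by linarith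
  qed
  have split: "{..<k} = insert 0 ({1..m} \<union> {m + 1..2 * m})"
    using k by auto
  have "(\<Sum>i<k. \<bar>cos (pi * real i / real k)\<bar>) =
      1 + ((\<Sum>i\<in>{1..m}. \<bar>cos (pi * real i / real k)\<bar>) +
        (\<Sum>i\<in>{m + 1..2 * m}. \<bar>cos (pi * real i / real k)\<bar>))"
    unfolding split by (subst sum.insert) (auto simp: sum.union_disjoint)
  also have "(\<Sum>i\<in>{m + 1..2 * m}. \<bar>cos (pi * real i / real k)\<bar>) =
      (\<Sum>i\<in>{1..m}. \<bar>cos (pi * real (k - i) / real k)\<bar>)"
    by (rule sum.reindex_bij_witness[where i = "\<lambda>i. k - i" and j = "\<lambda>i. k - i"]) (use k in auto)
  also have "\<dots> = (\<Sum>i\<in>{1..m}. \<bar>cos (pi * real i / real k)\<bar>)"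
  proof (rule sum.cong)
    fix i
    assume i: "i \<in> {1..m}"
    have "pi * real (k - i) / real k = pi - pi * real i / real k"
      using i k kpos by (simp add: field_simps of_nat_diff)
    then show "\<bar>cos (pi * real (k - i) / real k)\<bar> = \<bar>cos (pi * real i / real k)\<bar>"
      by simp
  qed simp
  also have "(\<Sum>i\<in>{1..m}. \<bar>cos (pi * real i / real k)\<bar>) = (\<Sum>i\<in>{1..m}. cos (real i * (pi / real k)))"
    using nonneg by (intro sum.cong) (auto simp: mult.commute)
  finally show ?thesis
    by simp
qed

lemma sum_abs_cos_roots_unity_odd:
  assumes "odd k"
  shows "(\<Sum>j<k. \<bar>cos (2 * pi * real j / real k)\<bar>) = 1 / sin (pi / (2 * real k))"
proof -
  obtain m where k: "k = 2 * m + 1"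
    using assms by (metis oddE)
  have kpos: "real k > 0"
    using k by simp
  have "sin (pi / (2 * real k)) > 0"
    by (rule sin_gt_zero) (use kpos in \<open>auto simp: field_simps\<close>)
  moreover have "sin (pi / (2 * real k)) * (1 + 2 * (\<Sum>i\<in>{1..m}. cos (real i * (pi / real k)))) = 1"
  proof -
    have "(2 * real m + 1) * (pi / real k) / 2 = pi / 2"
      using k by (simp add: field_simps)
    then show ?thesis
      using sin_half_mult_dirichlet_kernel[of "pi / real k" m] by (simp add: mult.commute)
  qed
  ultimately have "1 + 2 * (\<Sum>i\<in>{1..m}. cos (real i * (pi / real k))) = 1 / sin (pi / (2 * real k))"
    by (simp add: field_simps)
  then show ?thesis
    using sum_abs_cos_double_angles[OF assms] sum_abs_cos_symmetric[OF k] by simp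
qed

definition odd_cycle_energy :: "real \<Rightarrow> real" where
  "odd_cycle_energy x = 1 / sin (pi / (2 * x))"

lemma poly_energy_odd_cycle:
  assumes "odd k" "s = 1 \<or> s = -1"
  shows "poly_energy ([:0, 1:] ^ k - [:s:]) = odd_cycle_energy (real k)"
proof -
  have k: "k \<ge> 1"
    using assms(1) by (cases k) auto
  have "(\<Sum>z\<in>{z. z ^ k = s}. \<bar>Re z\<bar>) = (\<Sum>z\<in>{z::complex. z ^ k = 1}. \<bar>Re z\<bar>)"
    using assms sum_abs_Re_roots_minus_one by auto
  also have "\<dots> = odd_cycle_energy (real k)"
    unfolding odd_cycle_energy_def
    using sum_abs_Re_roots_unity[OF k] sum_abs_cos_roots_unity_odd[OF assms(1)] by simp
  finally show ?thesis
    using poly_energy_binomial[OF k] assms(2) by auto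
qed

section \<open>Monotonicity and convexity of the odd cycle energy\<close>

lemma convex_on_add_reflect_le:
  fixes f :: "real \<Rightarrow> real"
  assumes f: "convex_on I f" and I: "a \<in> I" "b \<in> I" and x: "a \<le> x" "x \<le> b"
  shows "f x + f (a + b - x) \<le> f a + f b"
proof (cases "a = b")
  case False
  define t where "t = (x - a) / (b - a)"
  have t: "0 \<le> t" "t \<le> 1"
    using x False unfolding t_def by (auto simp: field_simps)
  have "t * (b - a) = x - a"
    using False unfolding t_def by simp
  moreover have "(1 - t) *\<^sub>R a + t *\<^sub>R b = a + t * (b - a)" "(1 - t) *\<^sub>R b + t *\<^sub>R a = b - t * (b - a)"
    by (simp_all add: algebra_simps)
  ultimately have "(1 - t) *\<^sub>R a + t *\<^sub>R b = x" "(1 - t) *\<^sub>R b + t *\<^sub>R a = a + b - x"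
    by simp_all
  then have "f x \<le> (1 - t) * f a + t * f b" "f (a + b - x) \<le> (1 - t) * f b + t * f a"
    using convex_onD[OF f t I] convex_onD[OF f t I(2,1)] by auto
  then show ?thesis
    by (simp add: algebra_simps)
qed (use x in simp)

definition sq_mult_cos_div_sin_sq :: "real \<Rightarrow> real" where
  "sq_mult_cos_div_sin_sq u = u\<^sup>2 * cos u / (sin u)\<^sup>2"

lemma sin_gt_zero_half_pi: "0 < u \<Longrightarrow> u \<le> pi / 2 \<Longrightarrow> sin u > 0"
  by (intro sin_gt_zero) auto

lemma sq_mult_cos_div_sin_sq_deriv:
  assumes "0 < u" "u \<le> pi / 2"
  shows "(sq_mult_cos_div_sin_sq has_real_derivative
    u * (2 * sin u * cos u - u * (sin u)\<^sup>2 - 2 * u * (cos u)\<^sup>2) / (sin u) ^ 3) (at u)"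
proof -
  have s: "sin u \<noteq> 0"
    using sin_gt_zero_half_pi[OF assms] by simp
  have "((\<lambda>u. u\<^sup>2 * cos u / (sin u)\<^sup>2) has_real_derivative
     ((2 * u * cos u - u\<^sup>2 * sin u) * (sin u)\<^sup>2 - u\<^sup>2 * cos u * (2 * sin u * cos u)) / ((sin u)\<^sup>2)\<^sup>2) (at u)"
    using s by (auto intro!: derivative_eq_intros simp: power2_eq_square)
  moreover have "((2 * u * cos u - u\<^sup>2 * sin u) * (sin u)\<^sup>2 - u\<^sup>2 * cos u * (2 * sin u * cos u)) / ((sin u)\<^sup>2)\<^sup>2
     = u * (2 * sin u * cos u - u * (sin u)\<^sup>2 - 2 * u * (cos u)\<^sup>2) / (sin u) ^ 3"
    using s by (simp add: field_simps power2_eq_square power3_eq_cube)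
  ultimately show ?thesis
    unfolding sq_mult_cos_div_sin_sq_def[abs_def] by simp
qed

text \<open>The numerator is nonpositive by \<open>sin u \<le> u\<close> and \<open>2 cos u \<le> 1 + cos\<^sup>2 u\<close>.\<close>

lemma sq_mult_cos_div_sin_sq_deriv_nonpos:
  assumes "0 < u" "u \<le> pi / 2"
  shows "u * (2 * sin u * cos u - u * (sin u)\<^sup>2 - 2 * u * (cos u)\<^sup>2) / (sin u) ^ 3 \<le> 0"
proof -
  have s: "sin u > 0"
    using sin_gt_zero_half_pi[OF assms] .
  have c: "cos u \<ge> 0"
    using assms by (intro cos_ge_zero) auto
  have "2 * sin u * cos u \<le> 2 * u * cos u"
    using sin_x_le_x[of u] assms c by (simp add: mult_right_mono)
  also have "2 * u * cos u \<le> u * (1 + (cos u)\<^sup>2)"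
  proof -
    have "0 \<le> u * (1 - cos u)\<^sup>2"
      using assms by simp
    then show ?thesis
      by (simp add: power2_eq_square algebra_simps)
  qed
  also have "u * (1 + (cos u)\<^sup>2) = u * (sin u)\<^sup>2 + 2 * u * (cos u)\<^sup>2"
    by (subst sin_cos_squared_add[symmetric, of u]) (simp only: algebra_simps mult_2)
  finally have "2 * sin u * cos u - u * (sin u)\<^sup>2 - 2 * u * (cos u)\<^sup>2 \<le> 0"
    by simp
  then show ?thesis
    using assms s by (simp add: mult_nonneg_nonpos divide_nonpos_pos)
qed

lemma sq_mult_cos_div_sin_sq_antimono:
  assumes "0 < a" "a \<le> b" "b \<le> pi / 2"
  shows "sq_mult_cos_div_sin_sq b \<le> sq_mult_cos_div_sin_sq a"
  by (rule DERIV_nonpos_imp_nonincreasing[OF assms(2)])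
     (use assms sq_mult_cos_div_sin_sq_deriv sq_mult_cos_div_sin_sq_deriv_nonpos in
      \<open>meson order.trans less_le_trans\<close>)

lemma odd_cycle_energy_deriv:
  assumes "x \<ge> 1"
  shows "(odd_cycle_energy has_real_derivative sq_mult_cos_div_sin_sq (pi / (2 * x)) * (2 / pi)) (at x)"
proof -
  let ?u = "pi / (2 * x)"
  have s: "sin ?u \<noteq> 0"
    using sin_gt_zero_half_pi[of ?u] assms by (simp add: field_simps)
  have x: "x \<noteq> 0"
    using assms by simp
  have "((\<lambda>x. 1 / sin (pi / (2 * x))) has_real_derivative
      - (cos ?u * (- (pi * 2) / (2 * x)\<^sup>2)) / (sin ?u)\<^sup>2) (at x)"
    using s x by (auto intro!: derivative_eq_intros simp: power2_eq_square)
  moreover have "- (cos ?u * (- (pi * 2) / (2 * x)\<^sup>2)) / (sin ?u)\<^sup>2 = sq_mult_cos_div_sin_sq ?u * (2 / pi)"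
    unfolding sq_mult_cos_div_sin_sq_def using s x by (simp add: field_simps power2_eq_square)
  ultimately show ?thesis
    unfolding odd_cycle_energy_def[abs_def] by simp
qed

lemma convex_on_odd_cycle_energy: "convex_on {1..} odd_cycle_energy"
proof (rule convex_on_realI)
  show "(odd_cycle_energy has_real_derivative sq_mult_cos_div_sin_sq (pi / (2 * x)) * (2 / pi)) (at x)"
    if "x \<in> {1..}" for x
    using odd_cycle_energy_deriv that by simp
  show "sq_mult_cos_div_sin_sq (pi / (2 * x)) * (2 / pi) \<le> sq_mult_cos_div_sin_sq (pi / (2 * y)) * (2 / pi)"
    if "x \<in> {1..}" "y \<in> {1..}" "x \<le> y" for x y
  proof (rule mult_right_mono)
    show "sq_mult_cos_div_sin_sq (pi / (2 * x)) \<le> sq_mult_cos_div_sin_sq (pi / (2 * y))"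
      by (rule sq_mult_cos_div_sin_sq_antimono) (use that in \<open>auto simp: field_simps\<close>)
  qed simp
qed simp

lemma odd_cycle_energy_mono:
  assumes "1 \<le> x" "x \<le> y"
  shows "odd_cycle_energy x \<le> odd_cycle_energy y"
proof -
  have "0 < pi / (2 * y)" "pi / (2 * y) \<le> pi / (2 * x)" "pi / (2 * x) \<le> pi / 2"
    using assms by (auto simp: field_simps)
  then have "sin (pi / (2 * y)) \<le> sin (pi / (2 * x))" "sin (pi / (2 * y)) > 0"
    using sin_monotone_2pi_le sin_gt_zero_half_pi by auto
  then show ?thesis
    unfolding odd_cycle_energy_def by (simp add: frac_le)
qed

section \<open>Energy of the class D_n^s\<close>

lemma cycle_length_cycle_arcs: "distinct ws \<Longrightarrow> cycle_length (cycle_arcs ws) = length ws"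
  unfolding cycle_length_def by (rule card_cycle_arcs)

lemma cycle_vertices_cycle_arcs: "cycle_vertices (cycle_arcs ws) = set ws"
  unfolding cycle_vertices_def by (rule fst_cycle_arcs)

lemma cycle_sign_sidigraph:
  assumes "is_sidigraph n A sg" "cycle_arcs vs \<subseteq> A"
  shows "cycle_sign sg (cycle_arcs vs) \<in> {1, -1}"
proof -
  have "(\<Prod>a\<in>C. sg a) \<in> {1, -1}" if "finite C" "C \<subseteq> A" for C
    using that
  proof (induction C rule: finite_induct)
    case (insert a C)
    then have "sg a \<in> {1, -1}"
      using assms(1) unfolding is_sidigraph_def by auto
    with insert show ?case
      by auto
  qed simp
  then show ?thesis
    unfolding cycle_sign_def using assms(2) finite_cycle_arcs by blast
qed

lemma in_Dns_obtain_cycle_lists: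
  assumes "in_Dns n A sg"
  obtains vs1 vs2 where "is_dcycle_list A vs1" "is_dcycle_list A vs2"
    "dcycles A = {cycle_arcs vs1, cycle_arcs vs2}" "cycle_arcs vs1 \<noteq> cycle_arcs vs2"
    "set vs1 \<inter> set vs2 = {}"
proof -
  have "card (dcycles A) = 2"
    using assms unfolding in_Dns_def by simp
  then obtain C1 C2 where C: "dcycles A = {C1, C2}" "C1 \<noteq> C2"
    unfolding card_2_iff by blast
  then have "C1 \<in> dcycles A" "C2 \<in> dcycles A"
    by simp_all
  then obtain vs1 vs2 where "is_dcycle_list A vs1" "C1 = cycle_arcs vs1" "is_dcycle_list A vs2" "C2 = cycle_arcs vs2"
    unfolding dcycles_def by blast
  moreover have "cycle_vertices C1 \<inter> cycle_vertices C2 = {}"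
    using assms C unfolding in_Dns_def by auto
  ultimately show ?thesis
    using that C by (simp add: cycle_vertices_cycle_arcs)
qed

lemma energy_two_disjoint_odd_cycles:
  assumes sid: "is_sidigraph n A sg" and d1: "is_dcycle_list A vs1" and d2: "is_dcycle_list A vs2"
    and dc: "dcycles A = {cycle_arcs vs1, cycle_arcs vs2}" and disj: "set vs1 \<inter> set vs2 = {}"
    and odd: "odd (length vs1)" "odd (length vs2)"
  shows "energy n A sg = odd_cycle_energy (length vs1) + odd_cycle_energy (length vs2)"
proof -
  let ?X = "[:0, 1:] :: complex poly"
  define s1 s2 :: complex
    where "s1 = of_int (cycle_sign sg (cycle_arcs vs1))" and "s2 = of_int (cycle_sign sg (cycle_arcs vs2))"
  have s: "s1 = 1 \<or> s1 = -1" "s2 = 1 \<or> s2 = -1"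
    using cycle_sign_sidigraph[OF sid] d1 d2 unfolding s1_def s2_def is_dcycle_list_iff by force+
  have len: "length vs1 \<ge> 1" "length vs2 \<ge> 1"
    using d1 d2 unfolding is_dcycle_list_def by auto
  have "energy n A sg =
      poly_energy (?X ^ (n - length vs1 - length vs2) * (?X ^ length vs1 - [:s1:]) * (?X ^ length vs2 - [:s2:]))"
    unfolding energy_eq_poly_energy char_poly_signed_adj_two_cycles[OF sid d1 d2 dc disj] s1_def s2_def ..
  also have "\<dots> = poly_energy (?X ^ length vs1 - [:s1:]) + poly_energy (?X ^ length vs2 - [:s2:])"
    using binomial_poly_nonzero len by (simp add: poly_energy_mult poly_energy_monom)
  also have "\<dots> = odd_cycle_energy (length vs1) + odd_cycle_energy (length vs2)"
    using poly_energy_odd_cycle odd s by simp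
  finally show ?thesis .
qed

lemma energy_in_Dns_odd:
  assumes "in_Dns n A sg" "\<forall>C\<in>dcycles A. odd (cycle_length C)"
  shows "energy n A sg = (\<Sum>C\<in>dcycles A. odd_cycle_energy (cycle_length C))"
proof -
  obtain vs1 vs2 where d: "is_dcycle_list A vs1" "is_dcycle_list A vs2"
    and dc: "dcycles A = {cycle_arcs vs1, cycle_arcs vs2}" and ne: "cycle_arcs vs1 \<noteq> cycle_arcs vs2"
    and disj: "set vs1 \<inter> set vs2 = {}"
    using in_Dns_obtain_cycle_lists[OF assms(1)] .
  have len: "cycle_length (cycle_arcs vs1) = length vs1" "cycle_length (cycle_arcs vs2) = length vs2"
    using d cycle_length_cycle_arcs unfolding is_dcycle_list_def by auto
  have "odd (length vs1)" "odd (length vs2)"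
    using assms(2) dc len by auto
  then show ?thesis
    using energy_two_disjoint_odd_cycles[OF _ d dc disj] assms(1) dc ne len
    unfolding in_Dns_def by simp
qed

lemma in_Dns_obtain_odd_cycle_lengths:
  assumes "in_Dns n A sg" "\<forall>C\<in>dcycles A. odd (cycle_length C)"
  obtains p q where "odd p" "odd q" "3 \<le> p" "3 \<le> q" "p + q \<le> n"
    "energy n A sg = odd_cycle_energy p + odd_cycle_energy q"
proof -
  obtain vs1 vs2 where d: "is_dcycle_list A vs1" "is_dcycle_list A vs2"
    and dc: "dcycles A = {cycle_arcs vs1, cycle_arcs vs2}" and ne: "cycle_arcs vs1 \<noteq> cycle_arcs vs2"
    and disj: "set vs1 \<inter> set vs2 = {}"
    using in_Dns_obtain_cycle_lists[OF assms(1)] .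
  have dist: "distinct vs1" "distinct vs2" and two: "2 \<le> length vs1" "2 \<le> length vs2"
    using d unfolding is_dcycle_list_def by auto
  have odd: "odd (length vs1)" "odd (length vs2)"
    using assms(2) dc cycle_length_cycle_arcs[OF dist(1)] cycle_length_cycle_arcs[OF dist(2)] by auto
  have sid: "is_sidigraph n A sg"
    using assms(1) unfolding in_Dns_def by simp
  have "set vs1 \<union> set vs2 \<subseteq> {0..<n}"
    using set_subset_if_cycle_arcs_subset[OF sid] d unfolding is_dcycle_list_iff by blast
  then have "card (set vs1 \<union> set vs2) \<le> n"
    using card_mono[of "{0..<n}"] by fastforce
  then have "length vs1 + length vs2 \<le> n"
    using disj dist by (simp add: card_Un_disjoint distinct_card)
  moreover have "3 \<le> length vs1" "3 \<le> length vs2"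
    using two odd by presburger+
  ultimately show ?thesis
    using that odd energy_two_disjoint_odd_cycles[OF sid d dc disj odd] by blast
qed

lemma energy_Dnspq_3:
  assumes "is_Dnspq n 3 Q B tg" "odd Q"
  shows "energy n B tg = odd_cycle_energy 3 + odd_cycle_energy Q"
proof -
  obtain C1 C2 where C: "C1 \<in> dcycles B" "C2 \<in> dcycles B" "C1 \<noteq> C2"
    and len: "cycle_length C1 = 3" "cycle_length C2 = Q"
    using assms(1) unfolding is_Dnspq_def by blast
  have D: "in_Dns n B tg"
    using assms(1) unfolding is_Dnspq_def by simp
  have card: "card (dcycles B) = 2"
    using D unfolding in_Dns_def by simp
  then have "finite (dcycles B)"
    using card.infinite by fastforce
  then have dc: "dcycles B = {C1, C2}"
    using C card by (intro card_subset_eq[symmetric]) auto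
  then have "\<forall>C\<in>dcycles B. odd (cycle_length C)"
    using len assms(2) by auto
  then have "energy n B tg = (\<Sum>C\<in>{C1, C2}. odd_cycle_energy (cycle_length C))"
    using energy_in_Dns_odd[OF D] dc by simp
  then show ?thesis
    using C(3) len by simp
qed

section \<open>The extremal sidigraphs\<close>

definition two_cycles_digraph :: "nat \<Rightarrow> nat \<Rightarrow> (nat \<times> nat) set" where
  "two_cycles_digraph n Q =
    cycle_arcs [0, 1, 2] \<union> cycle_arcs [3..<3 + Q] \<union> {(0, v) | v. v = 3 \<or> 3 + Q \<le> v \<and> v < n}"

lemma cycle_arcs_triangle: "cycle_arcs [0, 1, 2] = {(0, 1), (1, 2), (2, 0 :: nat)}"
proof -
  have "{..<length [0, 1, 2 :: nat]} = {0, 1, 2}"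
    by auto
  then show ?thesis
    unfolding cycle_arcs_conv_image by simp
qed

lemma cycle_arcs_upt:
  "0 < Q \<Longrightarrow> cycle_arcs [a..<a + Q] = (\<lambda>i. (a + i, a + (i + 1) mod Q)) ` {..<Q}"
  unfolding cycle_arcs_conv_image by (intro image_cong) (auto simp: nth_upt)

lemma underlying_connected_if_reachable:
  assumes "\<forall>u\<in>{0..<n}. (r, u) \<in> A\<^sup>*"
  shows "underlying_connected n A"
  unfolding underlying_connected_def
proof (intro ballI)
  fix u v
  assume "u \<in> {0..<n}" "v \<in> {0..<n}"
  let ?R = "A \<union> A\<inverse>"
  have "A\<^sup>* \<subseteq> ?R\<^sup>*"
    by (rule rtrancl_mono) blast
  then have "(r, u) \<in> ?R\<^sup>*" "(r, v) \<in> ?R\<^sup>*"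
    using assms \<open>u \<in> {0..<n}\<close> \<open>v \<in> {0..<n}\<close> by auto
  moreover have "?R\<inverse> = ?R"
    by auto
  ultimately have "(u, r) \<in> ?R\<^sup>*" "(r, v) \<in> ?R\<^sup>*"
    by (metis rtrancl_converseI)+
  then show "(u, v) \<in> ?R\<^sup>*"
    by (rule rtrancl_trans)
qed

context
  fixes n Q :: nat
  assumes Q: "2 \<le> Q" and n: "3 + Q \<le> n"
begin

private abbreviation (input) "G \<equiv> two_cycles_digraph n Q"
private abbreviation (input) "C1 \<equiv> cycle_arcs [0, 1, 2 :: nat]"
private abbreviation (input) "C2 \<equiv> cycle_arcs [3..<3 + Q]"

private lemma C2_conv: "C2 = (\<lambda>i. (3 + i, 3 + (i + 1) mod Q)) ` {..<Q}"
  using Q by (intro cycle_arcs_upt) simp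

private lemma arc_from_right: "(x, y) \<in> G \<Longrightarrow> 3 \<le> x \<Longrightarrow> (x, y) \<in> C2 \<and> 3 \<le> y"
  unfolding two_cycles_digraph_def cycle_arcs_triangle C2_conv by auto

private lemma arc_within_left: "(x, y) \<in> G \<Longrightarrow> x < 3 \<Longrightarrow> y < 3 \<Longrightarrow> (x, y) \<in> C1"
  unfolding two_cycles_digraph_def C2_conv by auto

private lemma dcycle_cases: "is_dcycle_list G vs \<Longrightarrow> cycle_arcs vs = C1 \<or> cycle_arcs vs = C2"
proof -
  assume vs: "is_dcycle_list G vs"
  then have dist: "distinct vs" and ne: "vs \<noteq> []" and arcs: "cycle_arcs vs \<subseteq> G"
    unfolding is_dcycle_list_iff by auto
  note within = subsetD[OF cycle_arcs_subset_set]
  show ?thesis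
  proof (cases "\<exists>u\<in>set vs. 3 \<le> u")
    case True
    then have "set vs \<subseteq> {x. 3 \<le> x}"
      using is_dcycle_list_closed[OF vs] arc_from_right by blast
    then have "cycle_arcs vs \<subseteq> C2"
      using arcs arc_from_right within by fastforce
    then show ?thesis
      using cycle_arcs_subset_imp_eq[OF _ dist ne] by simp
  next
    case False
    then have "cycle_arcs vs \<subseteq> C1"
      using arcs arc_within_left within by fastforce
    then show ?thesis
      using cycle_arcs_subset_imp_eq[OF _ dist ne] by simp
  qed
qed

lemma dcycles_two_cycles_digraph: "dcycles G = {C1, C2}"
proof
  have "is_dcycle_list G [0, 1, 2]" "is_dcycle_list G [3..<3 + Q]"
    unfolding is_dcycle_list_iff two_cycles_digraph_def using Q by auto
  then show "{C1, C2} \<subseteq> dcycles G"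
    unfolding dcycles_def by blast
  show "dcycles G \<subseteq> {C1, C2}"
    unfolding dcycles_def using dcycle_cases by blast
qed

lemma is_sidigraph_two_cycles_digraph: "is_sidigraph n G (\<lambda>_. 1)"
  unfolding is_sidigraph_def
proof (intro conjI allI)
  have "3 + (i + 1) mod Q < n" for i
    using Q n mod_less_divisor[of Q "i + 1"] by linarith
  then show "G \<subseteq> {0..<n} \<times> {0..<n}"
    using n Q unfolding two_cycles_digraph_def cycle_arcs_triangle C2_conv by auto
  have "i \<noteq> (i + 1) mod Q" if "i < Q" for i
  proof (cases "i + 1 < Q")
    case False
    then have "i + 1 = Q"
      using that by simp
    then show ?thesis
      using Q by auto
  qed simp
  then show "(v, v) \<notin> G" for v
    unfolding two_cycles_digraph_def cycle_arcs_triangle C2_conv by auto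
qed simp

lemma underlying_connected_two_cycles_digraph: "underlying_connected n G"
proof (rule underlying_connected_if_reachable[of _ 0], intro ballI)
  fix u
  assume u: "u \<in> {0..<n}"
  have left: "(0, 1) \<in> G" "(1, 2) \<in> G" "(0, 3) \<in> G"
    unfolding two_cycles_digraph_def cycle_arcs_triangle by auto
  have right: "(3, 3 + i) \<in> G\<^sup>*" if "i < Q" for i
    using that
  proof (induction i)
    case (Suc i)
    then have "(3 + i, 3 + Suc i) \<in> G"
      unfolding two_cycles_digraph_def C2_conv by (auto intro!: image_eqI[of _ _ i])
    then show ?case
      using Suc by (meson Suc_lessD rtrancl_into_rtrancl)
  qed simp
  consider "u \<le> 2" | "3 \<le> u" "u < 3 + Q" | "3 + Q \<le> u"
    by linarith
  then show "(0, u) \<in> G\<^sup>*"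
  proof cases
    case 1
    then have "u = 0 \<or> u = 1 \<or> u = 2"
      by auto
    then show ?thesis
      using left by (meson r_into_rtrancl rtrancl.rtrancl_refl rtrancl_into_rtrancl)
  next
    case 2
    then obtain i where "u = 3 + i" "i < Q"
      by (metis add_less_cancel_left le_Suc_ex)
    then show ?thesis
      using right left by (meson converse_rtrancl_into_rtrancl)
  next
    case 3
    then have "(0, u) \<in> G"
      using u unfolding two_cycles_digraph_def by auto
    then show ?thesis
      by blast
  qed
qed

lemma is_Dnspq_two_cycles_digraph: "is_Dnspq n 3 Q G (\<lambda>_. 1)"
proof -
  have ne: "C1 \<noteq> C2"
    using Q unfolding cycle_arcs_triangle C2_conv by auto
  have "cycle_vertices C1 \<inter> cycle_vertices C2 = {}"
    unfolding cycle_vertices_def fst_cycle_arcs by auto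
  then have "in_Dns n G (\<lambda>_. 1)"
    unfolding in_Dns_def
    using is_sidigraph_two_cycles_digraph underlying_connected_two_cycles_digraph
      dcycles_two_cycles_digraph ne by auto
  moreover have "cycle_length C1 = 3" "cycle_length C2 = Q"
    unfolding cycle_length_def by (simp_all add: card_cycle_arcs)
  ultimately show ?thesis
    unfolding is_Dnspq_def cycle_sign_def
    using Q n ne dcycles_two_cycles_digraph by auto
qed

end

text \<open>The bound \<open>n \<le> Q + 4\<close> serves both parities of \<open>n\<close>: the cycle lengths \<open>p, q\<close> of
  \<open>A\<close> are odd, so \<open>p + q \<le> n\<close> is even and therefore at most \<open>Q + 3\<close>.\<close>

lemma energy_le_Dnspq_3:
  assumes A: "in_Dns n A sg" "\<forall>C\<in>dcycles A. odd (cycle_length C)"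
    and B: "is_Dnspq n 3 Q B tg" and Q: "odd Q" "n \<le> Q + 4"
  shows "energy n A sg \<le> energy n B tg"
proof -
  obtain p q where pq: "odd p" "odd q" "3 \<le> p" "3 \<le> q" "p + q \<le> n"
    and EA: "energy n A sg = odd_cycle_energy p + odd_cycle_energy q"
    using in_Dns_obtain_odd_cycle_lengths[OF A] .
  have "p + q \<le> Q + 3"
    using pq Q by presburger
  then have r: "3 \<le> real p" "real p \<le> real Q" "1 \<le> real q" "real q \<le> 3 + real Q - real p"
    using pq by linarith+
  have "odd_cycle_energy q \<le> odd_cycle_energy (3 + real Q - real p)"
    using odd_cycle_energy_mono r by blast
  moreover have "odd_cycle_energy p + odd_cycle_energy (3 + real Q - real p) \<le> odd_cycle_energy 3 + odd_cycle_energy Q"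
    using convex_on_add_reflect_le[OF convex_on_odd_cycle_energy] r by simp
  ultimately show ?thesis
    unfolding EA energy_Dnspq_3[OF B Q(1)] by simp
qed

lemma energy_Dnspq_3_3_le:
  assumes A: "in_Dns n A sg" "\<forall>C\<in>dcycles A. odd (cycle_length C)" and B: "is_Dnspq n 3 3 B tg"
  shows "energy n B tg \<le> energy n A sg"
proof -
  obtain p q :: nat where pq: "3 \<le> p" "3 \<le> q"
    and EA: "energy n A sg = odd_cycle_energy p + odd_cycle_energy q"
    using in_Dns_obtain_odd_cycle_lengths[OF A] by blast
  have "odd_cycle_energy 3 \<le> odd_cycle_energy p" "odd_cycle_energy 3 \<le> odd_cycle_energy q"
    using pq odd_cycle_energy_mono by simp_all
  then show ?thesis
    using energy_Dnspq_3[OF B] unfolding EA by simp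
qed

theorem theorem3p19:
  fixes n :: nat
  assumes "n > 5"
  defines "OddCls \<equiv> {(A, sg). in_Dns n A sg \<and> (\<forall>C\<in>dcycles A. odd (cycle_length C))}"
  shows "(even n \<longrightarrow>
            (\<exists>A sg. is_Dnspq n 3 (n - 3) A sg) \<and>
            (\<forall>A sg B tg. is_Dnspq n 3 (n - 3) B tg \<and> (A, sg) \<in> OddCls
                \<longrightarrow> energy n A sg \<le> energy n B tg))
       \<and> (odd n \<longrightarrow>
            (\<exists>A sg. is_Dnspq n 3 (n - 4) A sg) \<and>
            (\<forall>A sg B tg. is_Dnspq n 3 (n - 4) B tg \<and> (A, sg) \<in> OddCls
                \<longrightarrow> energy n A sg \<le> energy n B tg))
       \<and> (\<exists>A sg. is_Dnspq n 3 3 A sg)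
       \<and> (\<forall>A sg B tg. is_Dnspq n 3 3 B tg \<and> (A, sg) \<in> OddCls
                \<longrightarrow> energy n B tg \<le> energy n A sg)"
proof -
  have exists: "\<exists>A sg. is_Dnspq n 3 Q A sg" if "2 \<le> Q" "3 + Q \<le> n" for Q
    using is_Dnspq_two_cycles_digraph[OF that] by blast
  have "odd (n - 3)" "n \<le> n - 3 + 4" if "even n"
    using that assms(1) by presburger+
  moreover have "odd (n - 4)" "n \<le> n - 4 + 4" if "odd n"
    using that assms(1) by presburger+
  ultimately show ?thesis
    unfolding OddCls_def using assms(1) exists energy_le_Dnspq_3 energy_Dnspq_3_3_le by auto
qed

end
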